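(* For a connected hypergraph $\mathcal{G}=(V,E)$ on $n$ vertices, $$\operatorname{diam}(\mathcal{G})\ge\frac{4}{n\,(r(\mathcal{G})-1)\,\lambda_2(L_{\mathcal{G}})}.$$
   Context: A hypergraph $\mathcal{G}=(V,E)$ has a finite vertex set $V$ and a set $E$ of subsets of $V$ (edges), each of cardinality at least $2$. The rank $r(\mathcal{G})$ is the maximum edge cardinality. The degree $d_i$ is the number of edges containing $i$. The Laplacian $L_{\mathcal{G}}$ has $(L_{\mathcal{G}})_{ii}=d_i$ and $(L_{\mathcal{G}})_{ij}=-\sum_{e\in E,\, i,j\in e}\frac{1}{|e|-1}$ for $i\ne j$; $\lambda_2(L_{\mathcal{G}})$ is its second smallest eigenvalue. A path of length $l$ between $v_0,v_l$ is an alternating sequence $v_0e_1v_1\dots e_lv_l$ of distinct vertices and distinct edges with $v_{i-1},v_i\in e_i$; $d(i,j)$ is the minimum length of an $i$–$j$ path and $\operatorname{diam}(\mathcal{G})=\max_{i,j}d(i,j)$; connected means all distances are finite. *)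

theory Defs
  imports "Jordan_Normal_Form.Char_Poly"
begin

definition hypergraph :: "'a set \<Rightarrow> 'a set set \<Rightarrow> bool" where
  "hypergraph V E \<longleftrightarrow> finite V \<and> (\<forall>e\<in>E. e \<subseteq> V \<and> card e \<ge> 2)"

definition hrank :: "'a set set \<Rightarrow> nat" where
  "hrank E = Max (card ` E)"

definition hdegree :: "'a set set \<Rightarrow> 'a \<Rightarrow> nat" where
  "hdegree E i = card {e\<in>E. i \<in> e}"

definition hlap :: "'a set set \<Rightarrow> 'a \<Rightarrow> 'a \<Rightarrow> real" where
  "hlap E i j = (if i = j then real (hdegree E i)
                 else - (\<Sum>e\<in>{e\<in>E. i \<in> e \<and> j \<in> e}. 1 / (real (card e) - 1)))"

text \<open>A fixed enumeration of the vertex set, used to turn the Laplacian into a matrix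
  (the spectrum does not depend on this choice).\<close>
definition vertex_enum :: "'a set \<Rightarrow> nat \<Rightarrow> 'a" where
  "vertex_enum V = (SOME f. bij_betw f {0..<card V} V)"

definition lap_matrix :: "'a set \<Rightarrow> 'a set set \<Rightarrow> real mat" where
  "lap_matrix V E = mat (card V) (card V) (\<lambda>(i, j). hlap E (vertex_enum V i) (vertex_enum V j))"

text \<open>The k-th smallest eigenvalue (k \<ge> 1), counted with (algebraic) multiplicity:
  the least t such that at least k eigenvalues, with multiplicity, are \<le> t.\<close>
definition kth_eigenvalue :: "nat \<Rightarrow> real mat \<Rightarrow> real" where
  "kth_eigenvalue k A =
     Inf {t. k \<le> (\<Sum>\<mu>\<in>{\<mu>. poly (char_poly A) \<mu> = 0 \<and> \<mu> \<le> t}. order \<mu> (char_poly A))}"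

definition lambda2 :: "'a set \<Rightarrow> 'a set set \<Rightarrow> real" where
  "lambda2 V E = kth_eigenvalue 2 (lap_matrix V E)"

text \<open>A path v_0 e_1 v_1 ... e_l v_l: distinct vertices vs (length l+1), distinct edges es
  (length l), consecutive vertices v_{i-1}, v_i both in e_i.\<close>
definition hpath :: "'a set set \<Rightarrow> 'a list \<Rightarrow> 'a set list \<Rightarrow> bool" where
  "hpath E vs es \<longleftrightarrow> length vs = length es + 1 \<and> distinct vs \<and> distinct es \<and> set es \<subseteq> E \<and>
     (\<forall>k < length es. vs ! k \<in> es ! k \<and> vs ! (k + 1) \<in> es ! k)"

definition hpath_between :: "'a set set \<Rightarrow> 'a \<Rightarrow> 'a \<Rightarrow> nat \<Rightarrow> bool" where
  "hpath_between E i j l \<longleftrightarrow>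
     (\<exists>vs es. hpath E vs es \<and> hd vs = i \<and> last vs = j \<and> length es = l)"

definition hconnected :: "'a set \<Rightarrow> 'a set set \<Rightarrow> bool" where
  "hconnected V E \<longleftrightarrow> (\<forall>i\<in>V. \<forall>j\<in>V. \<exists>l. hpath_between E i j l)"

definition hdist :: "'a set set \<Rightarrow> 'a \<Rightarrow> 'a \<Rightarrow> nat" where
  "hdist E i j = (LEAST l. hpath_between E i j l)"

definition hdiam :: "'a set \<Rightarrow> 'a set set \<Rightarrow> nat" where
  "hdiam V E = Max {hdist E i j | i j. i \<in> V \<and> j \<in> V}"

end

theory Submission
  imports Defs "Jordan_Normal_Form.Schur_Decomposition"
begin

(* Take an eigenvector y of the Laplacian L for an eigenvalue mu <= lambda2 with y orthogonal to
   the all-ones vector.  It exists because L is real symmetric with L 1 = 0: if one of the two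
   smallest eigenvalues is nonzero its eigenvectors are orthogonal to 1; otherwise 0 is a double
   root of the characteristic polynomial and deflating L along 1 leaves 0 as an eigenvalue of the
   complementary block.
   Then sum y = 0 and y^T L y = sum over edges e of (sum_{a,b in e} (y a - y b)^2) / (2 (|e| - 1)),
   which equals mu |y|^2.  If y is largest at u and smallest at w, sum y = 0 forces
   4 |y|^2 <= n (y u - y w)^2.  On a shortest u-w path, Cauchy-Schwarz and the fact that an edge
   containing p and q contributes at least (y p - y q)^2 / (|e| - 1) >= (y p - y q)^2 / (r - 1) give
   (y u - y w)^2 <= diam (r - 1) mu |y|^2.  Hence 4 <= n (r - 1) lambda2 diam. *)

section \<open>Elementary inequalities\<close>

lemma sum_squared_le_card_mult_sum_squares:
  fixes f :: "'b \<Rightarrow> real"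
  shows "(\<Sum>i\<in>I. f i)\<^sup>2 \<le> real (card I) * (\<Sum>i\<in>I. (f i)\<^sup>2)"
proof -
  have "0 \<le> (\<Sum>i\<in>I. \<Sum>j\<in>I. (f i - f j)\<^sup>2)" by (intro sum_nonneg) auto
  also have "\<dots> = (\<Sum>i\<in>I. \<Sum>j\<in>I. (f i)\<^sup>2) - 2 * (\<Sum>i\<in>I. \<Sum>j\<in>I. f i * f j)
      + (\<Sum>i\<in>I. \<Sum>j\<in>I. (f j)\<^sup>2)"
    by (simp add: power2_diff sum.distrib sum_subtractf sum_distrib_left algebra_simps)
  also have "(\<Sum>i\<in>I. \<Sum>j\<in>I. f i * f j) = (\<Sum>i\<in>I. f i)\<^sup>2"
    by (simp add: power2_eq_square sum_product)
  also have "(\<Sum>i\<in>I. \<Sum>j\<in>I. (f j)\<^sup>2) = real (card I) * (\<Sum>i\<in>I. (f i)\<^sup>2)" by simp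
  also have "(\<Sum>i\<in>I. \<Sum>j\<in>I. (f i)\<^sup>2) = real (card I) * (\<Sum>i\<in>I. (f i)\<^sup>2)"
    by (simp add: sum_distrib_left mult.commute)
  finally show ?thesis by simp
qed

lemma sum_squares_le_card_mult_range:
  fixes y :: "'b \<Rightarrow> real"
  assumes fin: "finite V" and ne: "V \<noteq> {}" and sum0: "(\<Sum>a\<in>V. y a) = 0"
  obtains u w where "u \<in> V" "w \<in> V" "4 * (\<Sum>a\<in>V. (y a)\<^sup>2) \<le> real (card V) * (y u - y w)\<^sup>2"
proof -
  have "Max (y ` V) \<in> y ` V" "Min (y ` V) \<in> y ` V" using fin ne by simp_all
  then obtain u w where u: "u \<in> V" "y u = Max (y ` V)" and w: "w \<in> V" "y w = Min (y ` V)"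
    by (metis imageE)
  have "0 \<le> (\<Sum>a\<in>V. (y u - y a) * (y a - y w))"
    using fin by (intro sum_nonneg mult_nonneg_nonneg) (auto simp: u w)
  also have "\<dots> = (y u + y w) * (\<Sum>a\<in>V. y a) - (\<Sum>a\<in>V. (y a)\<^sup>2) - real (card V) * (y u * y w)"
    by (simp add: algebra_simps sum.distrib sum_subtractf sum_distrib_left power2_eq_square)
  finally have "(\<Sum>a\<in>V. (y a)\<^sup>2) \<le> real (card V) * (- (y u * y w))" using sum0 by simp
  also have "\<dots> \<le> real (card V) * ((y u - y w)\<^sup>2 / 4)"
  proof (intro mult_left_mono)
    have "(y u - y w)\<^sup>2 / 4 + y u * y w = (y u + y w)\<^sup>2 / 4" by (simp add: power2_eq_square field_simps)
    thus "- (y u * y w) \<le> (y u - y w)\<^sup>2 / 4" using zero_le_power2[of "y u + y w"] by linarith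
  qed simp
  finally show thesis using that[OF u(1) w(1)] by simp
qed

lemma divide_le_of_le_mult:
  fixes a b c :: real
  assumes "0 < a" "0 \<le> c" "a \<le> b * c"
  shows "a / b \<le> c"
proof -
  have "0 < b" using assms by (metis mult_nonpos_nonneg not_less order.trans)
  thus ?thesis using assms(3) by (simp add: pos_divide_le_eq mult.commute)
qed

section \<open>Eigenvalues of real symmetric matrices\<close>

lemma nonzero_vec_index:
  assumes "x \<in> carrier_vec n" "x \<noteq> 0\<^sub>v n"
  shows "\<exists>i<n. x $ i \<noteq> 0"
  using assms by (metis eq_vecI carrier_vecD index_zero_vec)

lemma mult_mat_vec_zero_vec: "A \<in> carrier_mat nr n \<Longrightarrow> A *\<^sub>v 0\<^sub>v n = 0\<^sub>v nr"
  by (intro eq_vecI) auto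

lemma four_block_mult_zero_append:
  fixes A1 A3 :: "'a :: comm_ring_1 mat"
  assumes A1: "A1 \<in> carrier_mat 1 1" and A3: "A3 \<in> carrier_mat m m" and u: "u \<in> carrier_vec m"
  shows "four_block_mat A1 (0\<^sub>m 1 m) (0\<^sub>m m 1) A3 *\<^sub>v (0\<^sub>v 1 @\<^sub>v u)
    = 0\<^sub>v 1 @\<^sub>v (A3 *\<^sub>v u)"
proof -
  have top: "A1 *\<^sub>v 0\<^sub>v 1 + 0\<^sub>m 1 m *\<^sub>v u = 0\<^sub>v 1"
    using A1 u by (intro eq_vecI) (auto simp: mult_mat_vec_def scalar_prod_def)
  have "0\<^sub>m m 1 *\<^sub>v 0\<^sub>v 1 = (0\<^sub>v m :: 'a vec)" by (rule mult_mat_vec_zero_vec) simp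
  hence bottom: "0\<^sub>m m 1 *\<^sub>v 0\<^sub>v 1 + A3 *\<^sub>v u = A3 *\<^sub>v u" using A3 u by simp
  have "four_block_mat A1 (0\<^sub>m 1 m) (0\<^sub>m m 1) A3 *\<^sub>v (0\<^sub>v 1 @\<^sub>v u)
      = (A1 *\<^sub>v 0\<^sub>v 1 + 0\<^sub>m 1 m *\<^sub>v u) @\<^sub>v (0\<^sub>m m 1 *\<^sub>v 0\<^sub>v 1 + A3 *\<^sub>v u)"
    by (rule four_block_mat_mult_vec[OF A1 _ _ A3 zero_carrier_vec u]) auto
  thus ?thesis unfolding top bottom .
qed

lemma conj_mat_eigenvector:
  fixes A W W' :: "'a :: field mat"
  assumes A: "A \<in> carrier_mat n n" and W: "W \<in> carrier_mat n n" and W': "W' \<in> carrier_mat n n"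
    and WW': "W * W' = 1\<^sub>m n" and z: "z \<in> carrier_vec n" and Az: "(W' * A * W) *\<^sub>v z = e \<cdot>\<^sub>v z"
  shows "A *\<^sub>v (W *\<^sub>v z) = e \<cdot>\<^sub>v (W *\<^sub>v z)"
proof -
  have "W * (W' * A * W) = (W * W') * A * W"
    using A W W' by (simp add: assoc_mult_mat[of _ n n _ n _ n])
  hence AW: "A * W = W * (W' * A * W)" using WW' by (simp add: left_mult_one_mat[OF A])
  have "A *\<^sub>v (W *\<^sub>v z) = (A * W) *\<^sub>v z" by (simp add: assoc_mult_mat_vec[OF A W z])
  also have "\<dots> = W *\<^sub>v ((W' * A * W) *\<^sub>v z)" unfolding AW using A W W' z by (intro assoc_mult_mat_vec) auto
  also have "\<dots> = e \<cdot>\<^sub>v (W *\<^sub>v z)" unfolding Az using W z by (rule mult_mat_vec)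
  finally show ?thesis .
qed

lemma char_poly_root_eigenvector:
  assumes A: "(A :: 'a :: field mat) \<in> carrier_mat n n" and root: "poly (char_poly A) \<mu> = 0"
  obtains x where "x \<in> carrier_vec n" "x \<noteq> 0\<^sub>v n" "A *\<^sub>v x = \<mu> \<cdot>\<^sub>v x"
proof -
  have "eigenvalue A \<mu>" using eigenvalue_root_char_poly[OF A] root by simp
  then obtain x where "eigenvector A x \<mu>" unfolding eigenvalue_def by blast
  hence "x \<in> carrier_vec n" "x \<noteq> 0\<^sub>v n" "A *\<^sub>v x = \<mu> \<cdot>\<^sub>v x"
    unfolding eigenvector_def using A by auto
  thus thesis by (rule that)
qed

lemma char_poly_four_block_scalar:
  assumes "(A3 :: 'a :: field mat) \<in> carrier_mat m m"
  shows "char_poly (four_block_mat (mat 1 1 (\<lambda>_. e)) (0\<^sub>m 1 m) (0\<^sub>m m 1) A3) = [:- e, 1:] * char_poly A3"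
proof -
  have "char_poly (four_block_mat (mat 1 1 (\<lambda>_. e)) (0\<^sub>m 1 m) (0\<^sub>m m 1) A3)
      = char_poly (mat 1 1 (\<lambda>_. e)) * char_poly A3"
    by (intro char_poly_four_block_zeros_col assms) auto
  also have "char_poly (mat 1 1 (\<lambda>_. e)) = [:- e, 1:]"
    by (simp add: char_poly_defs det_def sign_def)
  finally show ?thesis .
qed

lemma poly_prod_linear_eq_0_iff:
  "poly (\<Prod>b\<leftarrow>bs. [:- b, 1:]) (x :: 'a :: idom) = 0 \<longleftrightarrow> x \<in> set bs"
  by (induct bs) auto

lemma order_prod_linear:
  "Polynomial.order (x :: 'a :: idom) (\<Prod>b\<leftarrow>bs. [:- b, 1:]) = count_list bs x"
proof (induct bs)
  case (Cons b bs)
  have nz: "[:- b, 1:] * (\<Prod>b\<leftarrow>bs. [:- b, 1:]) \<noteq> (0 :: 'a poly)"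
    using prod_list_zero_iff[of "map (\<lambda>b. [:- b, 1:]) (b # bs)"] by auto
  have "Polynomial.order x (\<Prod>b\<leftarrow>b # bs. [:- b, 1:])
      = Polynomial.order x [:- b, 1:] + Polynomial.order x (\<Prod>b\<leftarrow>bs. [:- b, 1:])"
    using order_mult[OF nz] by (simp only: list.map prod_list.Cons)
  thus ?case using Cons by (simp add: order_linear')
qed (simp add: order_1_eq_0)

lemma poly_eq_0_of_order_linear_factor:
  assumes "p \<noteq> 0" "p = [:- e, 1:] * q" "2 \<le> Polynomial.order e p"
  shows "poly q (e :: 'a :: idom) = 0"
proof -
  have nz: "[:- e, 1:] * q \<noteq> 0" using assms(1,2) by simp
  have "Polynomial.order e p = 1 + Polynomial.order e q"
    unfolding assms(2) order_mult[OF nz] by simp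
  thus ?thesis using assms by (simp add: order_root)
qed

lemma sorted_nth_le_iff_length_filter:
  fixes s :: "'a :: linorder list"
  assumes s: "sorted s" and k: "0 < k" "k \<le> length s"
  shows "k \<le> length (filter (\<lambda>x. x \<le> t) s) \<longleftrightarrow> s ! (k - 1) \<le> t"
proof -
  let ?I = "{i. i < length s \<and> s ! i \<le> t}"
  have len: "length (filter (\<lambda>x. x \<le> t) s) = card ?I" by (rule length_filter_conv_card)
  show ?thesis
  proof
    assume kt: "k \<le> length (filter (\<lambda>x. x \<le> t) s)"
    show "s ! (k - 1) \<le> t"
    proof (rule ccontr)
      assume "\<not> s ! (k - 1) \<le> t"
      have "?I \<subseteq> {..<k - 1}"
      proof
        fix i assume i: "i \<in> ?I"
        hence "\<not> k - 1 \<le> i" using sorted_nth_mono[OF s, of "k - 1" i] \<open>\<not> _ \<le> t\<close> by auto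
        thus "i \<in> {..<k - 1}" by simp
      qed
      hence "card ?I \<le> k - 1" using card_mono[of "{..<k - 1}" ?I] by simp
      thus False using kt len k by simp
    qed
  next
    assume "s ! (k - 1) \<le> t"
    have "{..<k} \<subseteq> ?I"
    proof
      fix i assume i: "i \<in> {..<k}"
      hence "s ! i \<le> s ! (k - 1)" using sorted_nth_mono[OF s, of i "k - 1"] k by simp
      thus "i \<in> ?I" using i k \<open>s ! (k - 1) \<le> t\<close> by simp
    qed
    hence "k \<le> card ?I" using card_mono[of ?I "{..<k}"] by simp
    thus "k \<le> length (filter (\<lambda>x. x \<le> t) s)" using len by simp
  qed
qed

lemma kth_eigenvalue_split:
  assumes cp: "char_poly A = (\<Prod>b\<leftarrow>bs. [:- b, 1:])" and k: "0 < k" "k \<le> length bs"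
  shows "kth_eigenvalue k A = sort bs ! (k - 1)"
proof -
  have "(\<Sum>\<mu>\<in>{\<mu>. poly (char_poly A) \<mu> = 0 \<and> \<mu> \<le> t}. Polynomial.order \<mu> (char_poly A))
      = length (filter (\<lambda>\<mu>. \<mu> \<le> t) (sort bs))" for t
  proof -
    let ?f = "filter (\<lambda>\<mu>. \<mu> \<le> t) bs"
    have "{\<mu>. poly (char_poly A) \<mu> = 0 \<and> \<mu> \<le> t} = set ?f"
      unfolding cp poly_prod_linear_eq_0_iff by auto
    moreover have "count_list bs \<mu> = count_list ?f \<mu>" if "\<mu> \<le> t" for \<mu>
      using that by (induct bs) auto
    ultimately have "(\<Sum>\<mu>\<in>{\<mu>. poly (char_poly A) \<mu> = 0 \<and> \<mu> \<le> t}. Polynomial.order \<mu> (char_poly A))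
        = (\<Sum>\<mu>\<in>set ?f. count_list ?f \<mu>)"
      unfolding cp order_prod_linear by (intro sum.cong) auto
    also have "\<dots> = length ?f" by (rule sum_count_set) auto
    also have "\<dots> = length (filter (\<lambda>\<mu>. \<mu> \<le> t) (sort bs))"
      by (metis mset_filter mset_sort size_mset)
    finally show ?thesis .
  qed
  hence "kth_eigenvalue k A = Inf {sort bs ! (k - 1)..}"
    unfolding kth_eigenvalue_def atLeast_def
    using sorted_nth_le_iff_length_filter[of "sort bs" k] k by simp
  thus ?thesis by simp
qed

interpretation of_real_poly_hom: map_poly_inj_comm_ring_hom "of_real :: real \<Rightarrow> complex" ..

lemma symmetric_eigenvalue_real:
  fixes A :: "real mat" and x :: "complex vec" and a :: complex
  assumes A: "A \<in> carrier_mat n n" and sym: "A\<^sup>T = A"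
    and x: "x \<in> carrier_vec n" "x \<noteq> 0\<^sub>v n" and ev: "map_mat of_real A *\<^sub>v x = a \<cdot>\<^sub>v x"
  shows "a \<in> \<real>"
proof -
  have symij: "A $$ (i, j) = A $$ (j, i)" if "i < n" "j < n" for i j
    using arg_cong[OF sym, of "\<lambda>M. M $$ (i, j)"] that A by auto
  have evi: "(\<Sum>j<n. of_real (A $$ (i, j)) * x $ j) = a * x $ i" if "i < n" for i
    using arg_cong[OF ev, of "\<lambda>y. y $ i"] that A x
    by (simp add: scalar_prod_def lessThan_atLeast0 ac_simps)
  define s where "s = (\<Sum>i<n. cnj (x $ i) * (\<Sum>j<n. of_real (A $$ (i, j)) * x $ j))"
  define N where "N = (\<Sum>i<n. cnj (x $ i) * x $ i)"
  have "s = a * N" unfolding s_def N_def using evi by (simp add: sum_distrib_left ac_simps)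
  have "cnj s = (\<Sum>j<n. \<Sum>i<n. of_real (A $$ (i, j)) * x $ i * cnj (x $ j))"
    unfolding s_def by (subst sum.swap) (simp add: sum_distrib_left ac_simps)
  also have "\<dots> = s"
    unfolding s_def sum_distrib_left by (intro sum.cong refl) (simp add: symij ac_simps)
  finally have "cnj s = s" .
  have N: "N = of_real (\<Sum>i<n. (cmod (x $ i))\<^sup>2)"
    unfolding N_def of_real_sum of_real_power
    by (intro sum.cong refl) (metis complex_norm_square mult.commute of_real_power)
  obtain i where "i < n" "x $ i \<noteq> 0" using nonzero_vec_index[OF x] by blast
  hence "(\<Sum>i<n. (cmod (x $ i))\<^sup>2) > 0" by (intro sum_pos2[of _ i]) auto
  hence "N \<noteq> 0" unfolding N of_real_eq_0_iff by linarith
  moreover have "cnj N = N" unfolding N by simp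
  ultimately have "cnj a = a"
    using \<open>s = a * N\<close> \<open>cnj s = s\<close> by (metis complex_cnj_mult mult_right_cancel)
  thus ?thesis by (simp add: Reals_cnj_iff)
qed

lemma symmetric_char_poly_splits:
  fixes A :: "real mat"
  assumes A: "A \<in> carrier_mat n n" and sym: "A\<^sup>T = A"
  obtains bs where "char_poly A = (\<Prod>b\<leftarrow>bs. [:- b, 1:])" "length bs = n"
proof -
  let ?C = "map_mat (of_real :: real \<Rightarrow> complex) A"
  have C: "?C \<in> carrier_mat n n" using A by simp
  have cpC: "char_poly ?C = map_poly of_real (char_poly A)"
    using of_real_hom.char_poly_hom[OF A] by simp
  obtain as where as: "Polynomial.smult (lead_coeff (char_poly ?C)) (\<Prod>a\<leftarrow>as. [:- a, 1:]) = char_poly ?C"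
    "length as = degree (char_poly ?C)"
    using fundamental_theorem_algebra_factorized by blast
  have deg: "degree (char_poly ?C) = n" "lead_coeff (char_poly ?C) = 1"
    using degree_monic_char_poly[OF C] by auto
  have cpC_split: "char_poly ?C = (\<Prod>a\<leftarrow>as. [:- a, 1:])" using as(1) deg by simp
  have real: "a \<in> \<real>" if "a \<in> set as" for a
  proof -
    have "poly (char_poly ?C) a = 0"
      unfolding cpC_split poly_prod_linear_eq_0_iff using that .
    then obtain x where "eigenvector ?C x a"
      unfolding eigenvalue_root_char_poly[OF C, symmetric] eigenvalue_def by blast
    thus ?thesis
      unfolding eigenvector_def using C by (auto intro: symmetric_eigenvalue_real[OF A sym])
  qed
  define bs where "bs = map Re as"
  have "as = map of_real bs"
    unfolding bs_def map_map o_def using real by (intro map_idI[symmetric]) (auto simp: Reals_def)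
  hence "map_poly (of_real :: real \<Rightarrow> complex) (\<Prod>b\<leftarrow>bs. [:- b, 1:])
      = map_poly of_real (char_poly A)"
    unfolding cpC[symmetric] cpC_split of_real_poly_hom.hom_prod_list by (simp add: o_def)
  hence "char_poly A = (\<Prod>b\<leftarrow>bs. [:- b, 1:])" by (rule of_real_poly_hom.injectivity[symmetric])
  moreover have "length bs = n" unfolding bs_def using as(2) deg by simp
  ultimately show thesis by (rule that)
qed

lemma symmetric_eigenvectors_orthogonal:
  fixes A :: "real mat"
  assumes A: "A \<in> carrier_mat n n" and sym: "A\<^sup>T = A"
    and v: "v \<in> carrier_vec n" and Av: "A *\<^sub>v v = a \<cdot>\<^sub>v v"
    and w: "w \<in> carrier_vec n" and Aw: "A *\<^sub>v w = b \<cdot>\<^sub>v w" and ab: "a \<noteq> b"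
  shows "v \<bullet> w = 0"
proof -
  have "b * (v \<bullet> w) = v \<bullet> (A *\<^sub>v w)" using v w by (simp add: Aw)
  also have "\<dots> = (A\<^sup>T *\<^sub>v v) \<bullet> w" using transpose_vec_mult_scalar[OF A w v] by simp
  also have "\<dots> = a * (v \<bullet> w)" using v w by (simp add: sym Av)
  finally show ?thesis using ab by simp
qed

lemma orthogonal_basis_completion:
  fixes v :: "real vec"
  assumes v: "v \<in> carrier_vec n" and v0: "v \<noteq> 0\<^sub>v n"
  obtains W W' :: "real mat" where "W \<in> carrier_mat n n" "W' \<in> carrier_mat n n"
    "W' * W = 1\<^sub>m n" "W * W' = 1\<^sub>m n" "col W 0 = v"
    "\<And>j. 0 < j \<Longrightarrow> j < n \<Longrightarrow> v \<bullet> col W j = 0"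
    "\<And>y. y \<in> carrier_vec n \<Longrightarrow> (W' *\<^sub>v y) $ 0 = (v \<bullet> y) / (v \<bullet> v)"
proof -
  have n: "0 < n" using v v0 by (cases n) auto
  interpret cof_vec_space n "TYPE(real)" .
  define b where "b = basis_completion v"
  define ws where "ws = gram_schmidt n b"
  define W where "W = mat_of_cols n ws"
  define W' where "W' = corthogonal_inv W"
  from basis_completion[OF v v0, folded b_def]
  have dist_b: "distinct b" and indep: "\<not> lin_dep (set b)" and b: "set b \<subseteq> carrier_vec n"
    and hdb: "hd b = v" and len_b: "length b = n" by auto
  from hdb len_b n obtain vs where bv: "b = v # vs" by (cases b) auto
  from gram_schmidt_result[OF b dist_b indep refl, folded ws_def]
  have ws: "set ws \<subseteq> carrier_vec n" "corthogonal ws" "length ws = n"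
    by (auto simp: len_b)
  have ws0: "ws ! 0 = v"
    using gram_schmidt_hd[OF v, of vs, folded bv ws_def] ws(3) n by (cases ws) auto
  have W: "W \<in> carrier_mat n n" using ws unfolding W_def by auto
  have W': "W' \<in> carrier_mat n n" unfolding W'_def corthogonal_inv_def using W
    by (auto simp: mat_of_rows_def)
  have "inverts_mat W' W"
    unfolding W'_def using corthogonal_inv_result orthogonal_mat_of_cols ws W_def by metis
  hence W'W: "W' * W = 1\<^sub>m n" using W' unfolding inverts_mat_def by auto
  hence WW': "W * W' = 1\<^sub>m n" using mat_mult_left_right_inverse[OF W' W] by auto
  have colW: "col W j = ws ! j" if "j < n" for j
    unfolding W_def using that ws by (intro col_mat_of_cols) auto
  have rowW': "row W' 0 = (1 / (v \<bullet> v)) \<cdot>\<^sub>v v"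
    unfolding W'_def W_def corthogonal_inv_def using ws n v ws0
    by (subst mat_of_rows_row) (auto simp: vec_inv_def vec_conjugate_real)
  show thesis
  proof
    show "col W 0 = v" using colW[OF n] ws0 by simp
    show "v \<bullet> col W j = 0" if "0 < j" "j < n" for j
      using corthogonalD[OF ws(2), of 0 j] that ws ws0 colW
      by (simp add: vec_conjugate_real)
    show "(W' *\<^sub>v y) $ 0 = (v \<bullet> y) / (v \<bullet> v)" if "y \<in> carrier_vec n" for y
      using that W' n v rowW' by (simp add: smult_scalar_prod_distrib[of v n])
  qed (use W W' W'W WW' in auto)
qed

lemma symmetric_deflation:
  fixes A :: "real mat"
  assumes A: "A \<in> carrier_mat n n" and sym: "A\<^sup>T = A"
    and v: "v \<in> carrier_vec n" "v \<noteq> 0\<^sub>v n" and Av: "A *\<^sub>v v = e \<cdot>\<^sub>v v"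
  obtains W W' A3 :: "real mat" where "W \<in> carrier_mat n n" "W' \<in> carrier_mat n n"
    "W * W' = 1\<^sub>m n" "W' * W = 1\<^sub>m n" "A3 \<in> carrier_mat (n - 1) (n - 1)"
    "W' * A * W = four_block_mat (mat 1 1 (\<lambda>_. e)) (0\<^sub>m 1 (n - 1)) (0\<^sub>m (n - 1) 1) A3"
    "\<And>y. y \<in> carrier_vec n \<Longrightarrow> (W' *\<^sub>v y) $ 0 = (v \<bullet> y) / (v \<bullet> v)"
proof -
  have n: "0 < n" using v by (cases n) auto
  obtain W W' where W: "W \<in> carrier_mat n n" and W': "W' \<in> carrier_mat n n"
    and W'W: "W' * W = 1\<^sub>m n" and WW': "W * W' = 1\<^sub>m n" and col0: "col W 0 = v"
    and orth: "\<And>j. 0 < j \<Longrightarrow> j < n \<Longrightarrow> v \<bullet> col W j = 0"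
    and row0: "\<And>y. y \<in> carrier_vec n \<Longrightarrow> (W' *\<^sub>v y) $ 0 = (v \<bullet> y) / (v \<bullet> v)"
    using orthogonal_basis_completion[OF v] by metis
  define A' where "A' = W' * A * W"
  define A3 where "A3 = mat (n - 1) (n - 1) (\<lambda>(i, j). A' $$ (Suc i, Suc j))"
  have A': "A' \<in> carrier_mat n n" unfolding A'_def using A W W' by auto
  have entry: "A' $$ (i, j) = (W' *\<^sub>v (A *\<^sub>v col W j)) $ i" if "i < n" "j < n" for i j
  proof -
    have "A' = W' * (A * W)" unfolding A'_def using A W W' by (simp add: assoc_mult_mat)
    hence "A' $$ (i, j) = row W' i \<bullet> col (A * W) j" using that A W W' by simp
    also have "col (A * W) j = A *\<^sub>v col W j" by (rule col_mult2[OF A W that(2)])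
    finally show ?thesis using that W' by simp
  qed
  have first_col: "A' $$ (i, 0) = (if i = 0 then e else 0)" if "i < n" for i
  proof -
    have "W' *\<^sub>v (A *\<^sub>v col W 0) = e \<cdot>\<^sub>v col (W' * W) 0"
      unfolding col_mult2[OF W' W n] col0 Av using W' v by (simp add: mult_mat_vec)
    thus ?thesis using entry[OF that n] that n by (simp add: W'W)
  qed
  have first_row: "A' $$ (0, j) = 0" if "0 < j" "j < n" for j
  proof -
    have w: "col W j \<in> carrier_vec n" using W that by simp
    have "v \<bullet> (A *\<^sub>v col W j) = (A\<^sup>T *\<^sub>v v) \<bullet> col W j"
      using transpose_vec_mult_scalar[OF A w v(1)] by simp
    also have "\<dots> = 0" using sym Av orth[OF that] v w by simp
    finally show ?thesis using entry[OF n that(2)] row0 A w by simp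
  qed
  have "A' = four_block_mat (mat 1 1 (\<lambda>_. e)) (0\<^sub>m 1 (n - 1)) (0\<^sub>m (n - 1) 1) A3"
    using A' n by (intro eq_matI) (auto simp: A3_def first_col first_row)
  moreover have "A3 \<in> carrier_mat (n - 1) (n - 1)" unfolding A3_def by simp
  ultimately show thesis using that W W' WW' W'W row0 unfolding A'_def by blast
qed

text \<open>Deflating along \<open>v\<close> lowers the multiplicity of \<open>e\<close> by one, so \<open>e\<close> is still an eigenvalue
  of the complementary block, and its eigenvectors have no \<open>v\<close>-component.\<close>
lemma symmetric_orthogonal_eigenvector:
  fixes A :: "real mat"
  assumes A: "A \<in> carrier_mat n n" and sym: "A\<^sup>T = A"
    and v: "v \<in> carrier_vec n" "v \<noteq> 0\<^sub>v n" and Av: "A *\<^sub>v v = e \<cdot>\<^sub>v v"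
    and mult: "2 \<le> Polynomial.order e (char_poly A)"
  obtains w where "w \<in> carrier_vec n" "w \<noteq> 0\<^sub>v n" "A *\<^sub>v w = e \<cdot>\<^sub>v w" "v \<bullet> w = 0"
proof -
  obtain W W' A3 where W: "W \<in> carrier_mat n n" and W': "W' \<in> carrier_mat n n"
    and WW': "W * W' = 1\<^sub>m n" and W'W: "W' * W = 1\<^sub>m n" and A3: "A3 \<in> carrier_mat (n - 1) (n - 1)"
    and block: "W' * A * W = four_block_mat (mat 1 1 (\<lambda>_. e)) (0\<^sub>m 1 (n - 1)) (0\<^sub>m (n - 1) 1) A3"
    and row0: "\<And>y. y \<in> carrier_vec n \<Longrightarrow> (W' *\<^sub>v y) $ 0 = (v \<bullet> y) / (v \<bullet> v)"
    using symmetric_deflation[OF A sym v Av] by metis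
  have n: "0 < n" using v by (cases n) auto
  have "similar_mat_wit (W' * A * W) A W' W"
    by (rule similar_mat_witI[OF W'W WW' refl _ A W' W]) (use A W W' in simp)
  hence "char_poly A = [:- e, 1:] * char_poly A3"
    using char_poly_similar char_poly_four_block_scalar[OF A3] unfolding similar_mat_def block by metis
  hence "poly (char_poly A3) e = 0"
    using mult degree_monic_char_poly[OF A] by (intro poly_eq_0_of_order_linear_factor) auto
  then obtain u where u: "u \<in> carrier_vec (n - 1)" "u \<noteq> 0\<^sub>v (n - 1)" "A3 *\<^sub>v u = e \<cdot>\<^sub>v u"
    by (rule char_poly_root_eigenvector[OF A3])
  define z where "z = 0\<^sub>v 1 @\<^sub>v u"
  have z: "z \<in> carrier_vec n"
    unfolding z_def using append_carrier_vec[OF zero_carrier_vec[of 1] u(1)] n by simp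
  have "0\<^sub>v n = 0\<^sub>v 1 @\<^sub>v (0\<^sub>v (n - 1) :: real vec)" using n by (intro eq_vecI) auto
  hence "z \<noteq> 0\<^sub>v n" unfolding z_def using u(2) by (metis append_vec_eq zero_carrier_vec)
  have "(W' * A * W) *\<^sub>v z = 0\<^sub>v 1 @\<^sub>v (A3 *\<^sub>v u)"
    unfolding block z_def by (rule four_block_mult_zero_append[OF _ A3 u(1)]) simp
  also have "\<dots> = e \<cdot>\<^sub>v z" unfolding u(3) z_def using u(1) by (intro eq_vecI) auto
  finally have "(W' * A * W) *\<^sub>v z = e \<cdot>\<^sub>v z" .
  hence Aw: "A *\<^sub>v (W *\<^sub>v z) = e \<cdot>\<^sub>v (W *\<^sub>v z)" by (rule conj_mat_eigenvector[OF A W W' WW' z])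
  have W'w: "W' *\<^sub>v (W *\<^sub>v z) = z" using W W' z W'W by (simp flip: assoc_mult_mat_vec)
  have "v \<bullet> v \<noteq> 0"
    using conjugate_square_eq_0_vec[OF v(1)] v(2) by (simp add: vec_conjugate_real)
  moreover have "z $ 0 = 0" unfolding z_def using u(1) by simp
  ultimately have "v \<bullet> (W *\<^sub>v z) = 0" using row0[of "W *\<^sub>v z"] W z by (simp add: W'w)
  moreover have "W *\<^sub>v z \<noteq> 0\<^sub>v n"
    using W'w \<open>z \<noteq> 0\<^sub>v n\<close> mult_mat_vec_zero_vec[OF W'] by force
  ultimately show thesis using that[of "W *\<^sub>v z"] W z Aw by simp
qed

lemma symmetric_second_eigenvector_orthogonal_ones:
  fixes A :: "real mat"
  assumes A: "A \<in> carrier_mat n n" and sym: "A\<^sup>T = A" and n: "2 \<le> n"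
    and ker: "A *\<^sub>v vec n (\<lambda>_. 1) = 0\<^sub>v n"
  obtains x \<mu> where "x \<in> carrier_vec n" "x \<noteq> 0\<^sub>v n" "A *\<^sub>v x = \<mu> \<cdot>\<^sub>v x"
    "\<mu> \<le> kth_eigenvalue 2 A" "vec n (\<lambda>_. 1) \<bullet> x = 0"
proof -
  let ?one = "vec n (\<lambda>_. 1 :: real)"
  have one: "?one \<in> carrier_vec n" "?one \<noteq> 0\<^sub>v n" "A *\<^sub>v ?one = 0 \<cdot>\<^sub>v ?one"
    using n ker by (auto dest!: arg_cong[of _ _ "\<lambda>v. v $ 0"])
  obtain bs where cp: "char_poly A = (\<Prod>b\<leftarrow>bs. [:- b, 1:])" and len: "length bs = n"
    by (rule symmetric_char_poly_splits[OF A sym])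
  let ?s = "sort bs"
  have lam: "kth_eigenvalue 2 A = ?s ! 1" using kth_eigenvalue_split[OF cp] len n by simp
  have s01: "?s ! 0 \<le> ?s ! 1" using len n by (intro sorted_nth_mono) auto
  have s_in: "?s ! 0 \<in> set bs" "?s ! 1 \<in> set bs"
    using nth_mem[of 0 ?s] nth_mem[of 1 ?s] len n by simp_all
  show thesis
  proof (cases "?s ! 0 = 0 \<and> ?s ! 1 = 0")
    case False
    then obtain \<mu> where \<mu>: "\<mu> \<in> set bs" "\<mu> \<le> ?s ! 1" "\<mu> \<noteq> 0"
      using s01 s_in by (metis order_refl)
    hence "poly (char_poly A) \<mu> = 0" unfolding cp poly_prod_linear_eq_0_iff by simp
    then obtain x where x: "x \<in> carrier_vec n" "x \<noteq> 0\<^sub>v n" "A *\<^sub>v x = \<mu> \<cdot>\<^sub>v x"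
      by (rule char_poly_root_eigenvector[OF A])
    have "?one \<bullet> x = 0" using symmetric_eigenvectors_orthogonal[OF A sym one(1,3) x(1,3)] \<mu>(3) by simp
    thus thesis using that[OF x] \<mu>(2) lam by simp
  next
    case True
    have "2 \<le> length ?s" using len n by simp
    then obtain rest where "?s = 0 # 0 # rest"
      using True by (cases ?s rule: remdups_adj.cases) auto
    hence "2 \<le> count_list ?s 0" by simp
    hence "2 \<le> Polynomial.order 0 (char_poly A)"
      unfolding cp order_prod_linear by (metis count_mset mset_sort)
    then obtain w where "w \<in> carrier_vec n" "w \<noteq> 0\<^sub>v n" "A *\<^sub>v w = 0 \<cdot>\<^sub>v w" "?one \<bullet> w = 0"
      by (rule symmetric_orthogonal_eigenvector[OF A sym one])
    thus thesis using that True lam by simp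
  qed
qed

section \<open>The hypergraph Laplacian\<close>

lemma hypergraphD:
  assumes "hypergraph V E"
  shows "finite V" "finite E" "e \<in> E \<Longrightarrow> e \<subseteq> V" "e \<in> E \<Longrightarrow> finite e"
    "e \<in> E \<Longrightarrow> 2 \<le> card e"
  using assms finite_subset[of E "Pow V"] finite_subset[of e V]
  unfolding hypergraph_def by auto

lemma card_le_hrank: "finite E \<Longrightarrow> e \<in> E \<Longrightarrow> card e \<le> hrank E"
  unfolding hrank_def by simp

lemma hrank_ge_two:
  assumes H: "hypergraph V E" and E: "E \<noteq> {}"
  shows "2 \<le> hrank E"
proof -
  obtain e where e: "e \<in> E" using E by blast
  show ?thesis using hypergraphD(5)[OF H e] card_le_hrank[OF hypergraphD(2)[OF H] e] by linarith
qed

lemma hlap_sym: "hlap E a b = hlap E b a"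
  unfolding hlap_def by (simp add: conj_commute)

lemma hlap_row_sum:
  assumes H: "hypergraph V E" and a: "a \<in> V"
  shows "(\<Sum>b\<in>V. hlap E a b) = 0"
proof -
  note hf = hypergraphD[OF H]
  let ?Ea = "{e \<in> E. a \<in> e}"
  have "(\<Sum>b\<in>V - {a}. hlap E a b)
      = - (\<Sum>b\<in>V - {a}. \<Sum>e\<in>{e \<in> ?Ea. b \<in> e}. 1 / (real (card e) - 1))"
    unfolding hlap_def sum_negf[symmetric]
    by (intro sum.cong) (auto intro!: sum.cong arg_cong[of _ _ uminus])
  also have "(\<Sum>b\<in>V - {a}. \<Sum>e\<in>{e \<in> ?Ea. b \<in> e}. 1 / (real (card e) - 1))
      = (\<Sum>e\<in>?Ea. \<Sum>b\<in>{b \<in> V - {a}. b \<in> e}. 1 / (real (card e) - 1))"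
    using hf by (intro sum.swap_restrict) auto
  also have "\<dots> = (\<Sum>e\<in>?Ea. 1)"
  proof (intro sum.cong refl)
    fix e assume e: "e \<in> ?Ea"
    hence "{b \<in> V - {a}. b \<in> e} = e - {a}" and "2 \<le> card e" using hf(3,5) by auto
    thus "(\<Sum>b\<in>{b \<in> V - {a}. b \<in> e}. 1 / (real (card e) - 1)) = 1"
      using e by (simp add: of_nat_diff)
  qed
  also have "\<dots> = hlap E a a" unfolding hlap_def hdegree_def by simp
  finally show ?thesis using hf(1) a by (simp add: sum.remove)
qed

lemma quadratic_form_eq_sum_differences:
  fixes M :: "'b \<Rightarrow> 'b \<Rightarrow> real"
  assumes sym: "\<And>a b. M a b = M b a" and rows: "\<And>a. a \<in> V \<Longrightarrow> (\<Sum>b\<in>V. M a b) = 0"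
  shows "(\<Sum>a\<in>V. \<Sum>b\<in>V. y a * M a b * y b) = - (\<Sum>a\<in>V. \<Sum>b\<in>V. M a b * (y a - y b)\<^sup>2) / 2"
proof -
  have r1: "(\<Sum>a\<in>V. \<Sum>b\<in>V. M a b * (y a)\<^sup>2) = 0"
    using rows by (simp add: sum_distrib_right[symmetric])
  have r2: "(\<Sum>a\<in>V. \<Sum>b\<in>V. M a b * (y b)\<^sup>2) = 0"
    using r1 by (subst sum.swap) (simp add: sym)
  have "(\<Sum>a\<in>V. \<Sum>b\<in>V. M a b * (y a - y b)\<^sup>2)
      = (\<Sum>a\<in>V. \<Sum>b\<in>V. M a b * (y a)\<^sup>2) - 2 * (\<Sum>a\<in>V. \<Sum>b\<in>V. y a * M a b * y b)
        + (\<Sum>a\<in>V. \<Sum>b\<in>V. M a b * (y b)\<^sup>2)"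
    by (simp add: power2_diff algebra_simps sum.distrib sum_subtractf sum_distrib_left)
  thus ?thesis using r1 r2 by simp
qed

definition hedge_energy :: "('a \<Rightarrow> real) \<Rightarrow> 'a set \<Rightarrow> real" where
  "hedge_energy y e = (\<Sum>a\<in>e. \<Sum>b\<in>e. (y a - y b)\<^sup>2) / (2 * (real (card e) - 1))"

lemma hlap_quadratic_form:
  assumes H: "hypergraph V E"
  shows "(\<Sum>a\<in>V. \<Sum>b\<in>V. y a * hlap E a b * y b) = (\<Sum>e\<in>E. hedge_energy y e)"
proof -
  note hf = hypergraphD[OF H]
  let ?t = "\<lambda>e a b. if a \<in> e \<and> b \<in> e then (y a - y b)\<^sup>2 / (real (card e) - 1) else 0"
  have edge: "- (hlap E a b * (y a - y b)\<^sup>2) = (\<Sum>e\<in>E. ?t e a b)" for a b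
    using hf(2) by (cases "a = b")
      (simp_all add: hlap_def sum_distrib_right sum.inter_filter[symmetric])
  have "(\<Sum>a\<in>V. \<Sum>b\<in>V. - (hlap E a b * (y a - y b)\<^sup>2))
      = (\<Sum>e\<in>E. \<Sum>a\<in>V. \<Sum>b\<in>V. ?t e a b)"
    unfolding edge by (simp only: sum.swap[of _ E V])
  also have "\<dots> = (\<Sum>e\<in>E. 2 * hedge_energy y e)"
  proof (intro sum.cong refl)
    fix e assume e: "e \<in> E"
    have "V \<inter> e = e" using hf(3)[OF e] by blast
    hence "(\<Sum>a\<in>e. \<Sum>b\<in>e. (y a - y b)\<^sup>2 / (real (card e) - 1))
        = (\<Sum>a\<in>V. if a \<in> e
             then \<Sum>b\<in>V. if b \<in> e then (y a - y b)\<^sup>2 / (real (card e) - 1) else 0 else 0)"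
      by (simp add: sum.inter_restrict[OF hf(1), symmetric])
    also have "\<dots> = (\<Sum>a\<in>V. \<Sum>b\<in>V. ?t e a b)" by (intro sum.cong) auto
    finally have "(\<Sum>a\<in>V. \<Sum>b\<in>V. ?t e a b)
        = (\<Sum>a\<in>e. \<Sum>b\<in>e. (y a - y b)\<^sup>2 / (real (card e) - 1))" ..
    also have "\<dots> = (\<Sum>a\<in>e. \<Sum>b\<in>e. (y a - y b)\<^sup>2) / (real (card e) - 1)"
      by (simp add: sum_divide_distrib)
    also have "\<dots> = 2 * hedge_energy y e"
      unfolding hedge_energy_def by (cases "real (card e) - 1 = 0") (simp_all add: field_simps)
    finally show "(\<Sum>a\<in>V. \<Sum>b\<in>V. ?t e a b) = 2 * hedge_energy y e" .
  qed
  finally show ?thesis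
    by (simp add: quadratic_form_eq_sum_differences[OF hlap_sym hlap_row_sum[OF H]] sum_negf
        sum_distrib_left[symmetric])
qed

(* No assumption on e is needed: if card e \<le> 1 the double sum vanishes. *)
lemma hedge_energy_nonneg: "0 \<le> hedge_energy y e"
proof (cases "card e = 0")
  case True
  hence "(\<Sum>a\<in>e. \<Sum>b\<in>e. (y a - y b)\<^sup>2) = 0" by (auto simp: card_eq_0_iff)
  thus ?thesis unfolding hedge_energy_def by simp
next
  case False
  thus ?thesis unfolding hedge_energy_def by (intro divide_nonneg_nonneg sum_nonneg) auto
qed

lemma hedge_energy_lower_bound:
  assumes fin: "finite e" and p: "p \<in> e" and q: "q \<in> e" and pq: "p \<noteq> q"
  shows "(y p - y q)\<^sup>2 \<le> (real (card e) - 1) * hedge_energy y e"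
proof -
  let ?F = "\<lambda>a. \<Sum>b\<in>e. (y a - y b)\<^sup>2"
  have "2 \<le> card e" using card_mono[OF fin, of "{p, q}"] p q pq by simp
  have "(y p - y q)\<^sup>2 + (y q - y p)\<^sup>2 \<le> ?F p + ?F q"
    by (intro add_mono member_le_sum fin p q) auto
  also have "\<dots> = (\<Sum>a\<in>{p, q}. ?F a)" using pq by simp
  also have "\<dots> \<le> (\<Sum>a\<in>e. ?F a)" using fin p q by (intro sum_mono2) (auto intro: sum_nonneg)
  finally have "2 * (y p - y q)\<^sup>2 \<le> (\<Sum>a\<in>e. ?F a)" by (simp add: power2_commute)
  moreover have "(real (card e) - 1) * hedge_energy y e = (\<Sum>a\<in>e. ?F a) / 2"
    using \<open>2 \<le> card e\<close> unfolding hedge_energy_def by (simp add: field_simps)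
  ultimately show ?thesis by simp
qed

lemma vertex_enum_bij: "finite V \<Longrightarrow> bij_betw (vertex_enum V) {0..<card V} V"
  unfolding vertex_enum_def by (rule someI_ex[OF ex_bij_betw_nat_finite])

lemma lap_matrix_carrier: "lap_matrix V E \<in> carrier_mat (card V) (card V)"
  unfolding lap_matrix_def by simp

lemma lap_matrix_index:
  "i < card V \<Longrightarrow> j < card V \<Longrightarrow>
    lap_matrix V E $$ (i, j) = hlap E (vertex_enum V i) (vertex_enum V j)"
  unfolding lap_matrix_def by simp

lemma lap_matrix_symmetric: "(lap_matrix V E)\<^sup>T = lap_matrix V E"
proof (rule eq_matI)
  fix i j assume "i < dim_row (lap_matrix V E)" "j < dim_col (lap_matrix V E)"
  thus "(lap_matrix V E)\<^sup>T $$ (i, j) = lap_matrix V E $$ (i, j)"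
    by (simp add: lap_matrix_def hlap_sym[of E "vertex_enum V i"])
qed (simp_all add: lap_matrix_def)

lemma sum_vertex_enum:
  "finite V \<Longrightarrow> (\<Sum>a\<in>V. g a) = (\<Sum>i<card V. g (vertex_enum V i))"
  using sum.reindex_bij_betw[OF vertex_enum_bij, of V g] by (simp add: lessThan_atLeast0)

lemma index_mult_mat_vec_sum:
  "A \<in> carrier_mat nr n \<Longrightarrow> v \<in> carrier_vec n \<Longrightarrow> i < nr \<Longrightarrow>
    (A *\<^sub>v v) $ i = (\<Sum>j<n. A $$ (i, j) * v $ j)"
  by (simp add: scalar_prod_def lessThan_atLeast0)

lemma lap_matrix_ones:
  assumes H: "hypergraph V E"
  shows "lap_matrix V E *\<^sub>v vec (card V) (\<lambda>_. 1) = 0\<^sub>v (card V)"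
proof (rule eq_vecI)
  fix i assume "i < dim_vec (0\<^sub>v (card V) :: real vec)"
  hence i: "i < card V" by simp
  have fin: "finite V" using hypergraphD(1)[OF H] .
  have "(lap_matrix V E *\<^sub>v vec (card V) (\<lambda>_. 1)) $ i
      = (\<Sum>j<card V. hlap E (vertex_enum V i) (vertex_enum V j))"
    using i by (simp add: index_mult_mat_vec_sum[OF lap_matrix_carrier] lap_matrix_index)
  also have "\<dots> = (\<Sum>b\<in>V. hlap E (vertex_enum V i) b)" by (rule sum_vertex_enum[OF fin, symmetric])
  also have "\<dots> = 0" using i bij_betwE[OF vertex_enum_bij[OF fin]] by (intro hlap_row_sum[OF H]) auto
  finally show "(lap_matrix V E *\<^sub>v vec (card V) (\<lambda>_. 1)) $ i = 0\<^sub>v (card V) $ i" using i by simp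
qed (simp add: lap_matrix_def)

lemma hypergraph_lambda2_test_function:
  assumes H: "hypergraph V E" and n: "2 \<le> card V"
  obtains y :: "'a \<Rightarrow> real" where "(\<Sum>a\<in>V. y a) = 0" "0 < (\<Sum>a\<in>V. (y a)\<^sup>2)"
    "(\<Sum>e\<in>E. hedge_energy y e) \<le> lambda2 V E * (\<Sum>a\<in>V. (y a)\<^sup>2)"
proof -
  let ?n = "card V" and ?f = "vertex_enum V" and ?L = "lap_matrix V E"
  have fin: "finite V" using hypergraphD(1)[OF H] .
  have bij: "bij_betw ?f {0..<?n} V" using vertex_enum_bij[OF fin] .
  obtain x \<mu> where x: "x \<in> carrier_vec ?n" "x \<noteq> 0\<^sub>v ?n" "?L *\<^sub>v x = \<mu> \<cdot>\<^sub>v x"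
    and \<mu>: "\<mu> \<le> kth_eigenvalue 2 ?L" and ortho: "vec ?n (\<lambda>_. 1) \<bullet> x = 0"
    by (rule symmetric_second_eigenvector_orthogonal_ones[OF lap_matrix_carrier lap_matrix_symmetric n
        lap_matrix_ones[OF H]])
  define y where "y a = x $ inv_into {0..<?n} ?f a" for a
  have y: "y (?f i) = x $ i" if "i < ?n" for i
    unfolding y_def using bij that by (simp add: bij_betw_def inv_into_f_f)
  have sum0: "(\<Sum>a\<in>V. y a) = 0"
    using x(1) ortho by (simp add: sum_vertex_enum[OF fin] y scalar_prod_def lessThan_atLeast0)
  have S: "(\<Sum>a\<in>V. (y a)\<^sup>2) = (\<Sum>i<?n. (x $ i)\<^sup>2)"
    by (simp add: sum_vertex_enum[OF fin] y)
  have pos: "0 < (\<Sum>a\<in>V. (y a)\<^sup>2)"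
  proof -
    obtain i where "i < ?n" "x $ i \<noteq> 0" using nonzero_vec_index[OF x(1,2)] by blast
    thus ?thesis unfolding S by (intro sum_pos2[of _ i]) auto
  qed
  have "(\<Sum>e\<in>E. hedge_energy y e) = (\<Sum>i<?n. \<Sum>j<?n. x $ i * ?L $$ (i, j) * x $ j)"
    unfolding hlap_quadratic_form[OF H, symmetric] by (simp add: sum_vertex_enum[OF fin] y lap_matrix_index)
  also have "\<dots> = (\<Sum>i<?n. x $ i * (?L *\<^sub>v x) $ i)"
    using x(1) by (intro sum.cong refl)
      (simp add: index_mult_mat_vec_sum[OF lap_matrix_carrier] sum_distrib_left ac_simps)
  also have "\<dots> = \<mu> * (\<Sum>a\<in>V. (y a)\<^sup>2)"
    unfolding S using x(1) by (simp add: x(3) sum_distrib_left power2_eq_square ac_simps)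
  also have "\<dots> \<le> lambda2 V E * (\<Sum>a\<in>V. (y a)\<^sup>2)"
    using \<mu> pos unfolding lambda2_def by (intro mult_right_mono) auto
  finally show thesis by (rule that[OF sum0 pos])
qed

section \<open>Paths and the diameter\<close>

lemma hpath_value_gap:
  assumes H: "hypergraph V E" and P: "hpath E vs es"
  shows "(y (hd vs) - y (last vs))\<^sup>2
    \<le> real (length es) * (real (hrank E) - 1) * (\<Sum>e\<in>E. hedge_energy y e)"
proof (cases "es = []")
  case True
  hence "hd vs = last vs" using P unfolding hpath_def by (cases vs) auto
  thus ?thesis using True by simp
next
  case False
  note hf = hypergraphD[OF H]
  let ?D = "length es" and ?r = "real (hrank E)"
  have lv: "length vs = ?D + 1" and dv: "distinct vs" and de: "distinct es" and sE: "set es \<subseteq> E"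
    and inn: "\<And>k. k < ?D \<Longrightarrow> vs ! k \<in> es ! k \<and> vs ! Suc k \<in> es ! k"
    using P unfolding hpath_def by auto
  have "E \<noteq> {}" using False sE by (cases es) auto
  hence r: "2 \<le> ?r" using hrank_ge_two[OF H] by simp
  define d where "d k = y (vs ! k) - y (vs ! Suc k)" for k
  have "(\<Sum>k<?D. d k) = y (vs ! 0) - y (vs ! ?D)"
    unfolding d_def by (rule sum_lessThan_telescope')
  also have "vs ! 0 = hd vs" using lv by (cases vs) auto
  also have "vs ! ?D = last vs" using lv by (subst last_conv_nth) auto
  finally have "(y (hd vs) - y (last vs))\<^sup>2 \<le> real ?D * (\<Sum>k<?D. (d k)\<^sup>2)"
    using sum_squared_le_card_mult_sum_squares[of d "{..<?D}"] by simp
  also have "(\<Sum>k<?D. (d k)\<^sup>2) \<le> (\<Sum>k<?D. (?r - 1) * hedge_energy y (es ! k))"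
  proof (intro sum_mono)
    fix k assume k: "k \<in> {..<?D}"
    have e: "es ! k \<in> E" using sE k by auto
    have "vs ! k \<noteq> vs ! Suc k" using dv lv k by (simp add: nth_eq_iff_index_eq)
    hence "(d k)\<^sup>2 \<le> (real (card (es ! k)) - 1) * hedge_energy y (es ! k)"
      unfolding d_def using inn k hf(4)[OF e] by (intro hedge_energy_lower_bound) auto
    also have "\<dots> \<le> (?r - 1) * hedge_energy y (es ! k)"
      using card_le_hrank[OF hf(2) e] by (intro mult_right_mono hedge_energy_nonneg) auto
    finally show "(d k)\<^sup>2 \<le> (?r - 1) * hedge_energy y (es ! k)" .
  qed
  also have "\<dots> = (?r - 1) * (\<Sum>e\<in>set es. hedge_energy y e)"
    using de by (simp add: sum_distrib_left sum.distinct_set_conv_list lessThan_atLeast0 sum_list_sum_nth)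
  also have "\<dots> \<le> (?r - 1) * (\<Sum>e\<in>E. hedge_energy y e)"
    using r sE hf(2) by (intro mult_left_mono sum_mono2 hedge_energy_nonneg) auto
  finally show ?thesis using r by (simp add: mult_left_mono mult.assoc)
qed

lemma hpath_hdist:
  assumes "hconnected V E" "i \<in> V" "j \<in> V"
  obtains vs es where "hpath E vs es" "hd vs = i" "last vs = j" "length es = hdist E i j"
proof -
  have "\<exists>l. hpath_between E i j l" using assms unfolding hconnected_def by blast
  hence "hpath_between E i j (hdist E i j)" unfolding hdist_def by (rule LeastI_ex)
  then obtain vs es where "hpath E vs es" "hd vs = i" "last vs = j" "length es = hdist E i j"
    unfolding hpath_between_def by blast
  thus thesis by (rule that)
qed

lemma hdist_le_hdiam:
  assumes "finite V" "i \<in> V" "j \<in> V"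
  shows "hdist E i j \<le> hdiam V E"
proof -
  have "{hdist E i j | i j. i \<in> V \<and> j \<in> V} = (\<lambda>(i, j). hdist E i j) ` (V \<times> V)" by auto
  thus ?thesis unfolding hdiam_def using assms by (intro Max_ge) auto
qed

lemma hconnected_edges_nonempty:
  assumes conn: "hconnected V E" and V: "2 \<le> card V"
  shows "E \<noteq> {}"
proof -
  obtain i where i: "i \<in> V" using V by fastforce
  have "V \<noteq> {i}" using V by auto
  then obtain j where j: "j \<in> V" "j \<noteq> i" using i by blast
  obtain vs es where P: "hpath E vs es" "hd vs = i" "last vs = j"
    by (rule hpath_hdist[OF conn i j(1)])
  have "es \<noteq> []" using P j(2) unfolding hpath_def by (cases vs) auto
  thus ?thesis using P(1) unfolding hpath_def by (cases es) auto
qed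

lemma value_gap_le_hdiam:
  assumes H: "hypergraph V E" and conn: "hconnected V E" and E: "E \<noteq> {}"
    and i: "i \<in> V" and j: "j \<in> V"
  shows "(y i - y j)\<^sup>2 \<le> real (hdiam V E) * (real (hrank E) - 1) * (\<Sum>e\<in>E. hedge_energy y e)"
proof -
  obtain vs es where P: "hpath E vs es" "hd vs = i" "last vs = j" "length es = hdist E i j"
    by (rule hpath_hdist[OF conn i j])
  have "(y i - y j)\<^sup>2 \<le> real (hdist E i j) * (real (hrank E) - 1) * (\<Sum>e\<in>E. hedge_energy y e)"
    using hpath_value_gap[OF H P(1), of y] P by simp
  also have "\<dots> \<le> real (hdiam V E) * (real (hrank E) - 1) * (\<Sum>e\<in>E. hedge_energy y e)"
    using hdist_le_hdiam[OF hypergraphD(1)[OF H] i j] hrank_ge_two[OF H E]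
    by (intro mult_right_mono sum_nonneg hedge_energy_nonneg) auto
  finally show ?thesis .
qed

theorem theorem9:
  fixes V :: "'a set" and E :: "'a set set"
  assumes "hypergraph V E"
    and "card V \<ge> 2"
    and "hconnected V E"
  shows "real (hdiam V E) \<ge>
           4 / (real (card V) * (real (hrank E) - 1) * lambda2 V E)"
proof -
  note H = assms(1) and n = assms(2) and conn = assms(3)
  have E: "E \<noteq> {}" using hconnected_edges_nonempty[OF conn n] .
  obtain y where sum0: "(\<Sum>a\<in>V. y a) = 0" and S: "0 < (\<Sum>a\<in>V. (y a)\<^sup>2)"
    and Q: "(\<Sum>e\<in>E. hedge_energy y e) \<le> lambda2 V E * (\<Sum>a\<in>V. (y a)\<^sup>2)"
    by (rule hypergraph_lambda2_test_function[OF H n])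
  obtain u w where u: "u \<in> V" and w: "w \<in> V"
    and range: "4 * (\<Sum>a\<in>V. (y a)\<^sup>2) \<le> real (card V) * (y u - y w)\<^sup>2"
    using sum_squares_le_card_mult_range[OF hypergraphD(1)[OF H] _ sum0] n by force
  let ?d = "real (hdiam V E)" and ?r = "real (hrank E)"
  note range
  also have "\<dots> \<le> real (card V) * (?d * (?r - 1) * (\<Sum>e\<in>E. hedge_energy y e))"
    by (intro mult_left_mono value_gap_le_hdiam[OF H conn E u w]) simp
  also have "\<dots> \<le> real (card V) * (?d * (?r - 1) * (lambda2 V E * (\<Sum>a\<in>V. (y a)\<^sup>2)))"
    using hrank_ge_two[OF H E] by (intro mult_left_mono Q) auto
  finally have "4 \<le> real (card V) * (?r - 1) * lambda2 V E * ?d"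
    using S by (simp add: ac_simps)
  thus ?thesis by (intro divide_le_of_le_mult) simp_all
qed

end
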